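(* Let the setting and notation be as in the context. Suppose the $L_1$-Consistency Assumption and the Concentration Assumption hold, and that $n^{1/2}\big(r_4(n)r_3(n,\theta^* )+r_5(n)r_1(n,\theta^* )\big)=o(1)$. Then $$n^{1/2}\hat S(\hat{\boldsymbol\beta}_{\theta^*})=n^{1/2}S(\boldsymbol\beta^* )+o_p(1),$$ where $S(\boldsymbol\beta)=\mathbf v^{*T}\mathbf t(\mathbf Z,\boldsymbol\beta)$ and $\hat{\boldsymbol\beta}_{\theta^*}=(\theta^*,\hat{\boldsymbol\gamma}^T)^T$.
   Context: Data: a random matrix $\mathbf Z\in\mathbb R^{n\times q}$; $\mathbb P^*$ denotes probability under the true parameter $\boldsymbol\beta^*\in\mathbb R^d$; $o_p(1)$ is with respect to $\mathbb P^*$ as $n\to\infty$ ($d$ may depend on $n$). Let $\mathbf t(\mathbf Z,\boldsymbol\beta):\mathbb R^{n\times q}\times\mathbb R^d\to\mathbb R^d$ be twice differentiable in $\boldsymbol\beta$, $E_{\mathbf t}(\boldsymbol\beta)=\lim_n\mathbb E\,\mathbf t(\mathbf Z,\boldsymbol\beta)$, $\boldsymbol\beta^*$ the unique root of $E_{\mathbf t}$. $\mathbf T(\mathbf Z,\boldsymbol\beta)=\partial\mathbf t/\partial\boldsymbol\beta$, $E_{\mathbf T}(\boldsymbol\beta)=\lim_n\mathbb E\,\mathbf T(\mathbf Z,\boldsymbol\beta)$, invertible at $\boldsymbol\beta^*$. Write $\boldsymbol\beta=(\theta,\boldsymbol\gamma^T)^T$ ($\theta$ first coordinate), $\boldsymbol\beta^*=(\theta^*,\boldsymbol\gamma^{*T})^T$,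 $\boldsymbol\beta_{\check\theta}=(\check\theta,\boldsymbol\gamma^T)^T$. $\mathbf v^{*T}$ = first row of $[E_{\mathbf T}(\boldsymbol\beta^* )]^{-1}$. $\hat{\boldsymbol\beta}=(\hat\theta,\hat{\boldsymbol\gamma}^T)^T=\arg\min\|\boldsymbol\beta\|_1$ s.t. $\|\mathbf t(\mathbf Z,\boldsymbol\beta)\|_\infty\le\lambda$; $\hat{\mathbf v}=\arg\min\|\mathbf v\|_1$ s.t. $\|\mathbf v^T\mathbf T(\mathbf Z,\hat{\boldsymbol\beta})-\mathbf e_1\|_\infty\le\lambda'$, $\mathbf e_1=(1,0,\dots,0)$; $\hat S(\boldsymbol\beta)=\hat{\mathbf v}^T\mathbf t(\mathbf Z,\boldsymbol\beta)$. $[\mathbf A]_{-1}$ is $\mathbf A$ without its first column. Concentration Assumption: there is a neighborhood $\mathcal N_{\theta^*}$ of $\theta^*$ and functions $r_1,r_2,r_3$ with $\sup_{\theta\in\mathcal N_{\theta^*}}\max_i r_i(n,\theta)=o(1)$ such that for all $\theta\in\mathcal N_{\theta^*}$: $\lim_n\mathbb P^*(\|\mathbf t(\mathbf Z,\boldsymbol\beta^*_\theta)-E_{\mathbf t}(\boldsymbol\beta^*_\theta)\|_\infty\le r_1(n,\theta))=1$; $\lim_n\mathbb P^*(|\mathbf v^{*T}\mathbf t(\mathbf Z,\boldsymbol\beta^*_\theta)-\mathbf v^{*T}E_{\mathbf t}(\boldsymbol\beta^*_\theta)|\le r_2(n,\theta))=1$; $\lim_n\mathbb P^*(\sup_{\nu\in[0,1]}\|\hat{\mathbf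 v}^T\mathbf T(\mathbf Z,\tilde{\boldsymbol\beta}_\nu)-\mathbf v^{*T}E_{\mathbf T}(\boldsymbol\beta^*_\theta)\|_\infty\le r_3(n,\theta))=1$ with $\tilde{\boldsymbol\beta}_\nu=\nu\hat{\boldsymbol\beta}_\theta+(1-\nu)\boldsymbol\beta^*_\theta$; and $\sup_{\theta\in\mathcal N_{\theta^*}}\|E_{\mathbf t}(\boldsymbol\beta^*_\theta)\|_\infty<\infty$, $\sup_{\theta\in\mathcal N_{\theta^*}}\|\mathbf v^{*T}[E_{\mathbf T}(\boldsymbol\beta^*_\theta)]_{-1}\|_\infty<\infty$. $L_1$-Consistency Assumption: $\lim_n\mathbb P^*(\|\hat{\boldsymbol\beta}-\boldsymbol\beta^*\|_1\le r_4(n))=1$, $\lim_n\mathbb P^*(\|\hat{\mathbf v}-\mathbf v^*\|_1\le r_5(n))=1$, $\max(r_4(n),r_5(n))=o(1)$. *)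

theory Defs
  imports "HOL-Probability.Probability"
begin

text \<open>Vectors of R^d are modelled as functions nat => real vanishing from index d on
  (d may depend on n); matrices as nat => nat => real.\<close>

definition vecs :: "nat \<Rightarrow> (nat \<Rightarrow> real) set" where
  "vecs d = {x. \<forall>j\<ge>d. x j = 0}"

definition mats :: "nat \<Rightarrow> nat \<Rightarrow> (nat \<Rightarrow> nat \<Rightarrow> real) set" where
  "mats n q = {z. \<forall>i j. (n \<le> i \<or> q \<le> j) \<longrightarrow> z i j = 0}"

definition l1norm :: "nat \<Rightarrow> (nat \<Rightarrow> real) \<Rightarrow> real" where
  "l1norm d x = (\<Sum>j<d. \<bar>x j\<bar>)"

definition linfnorm :: "nat \<Rightarrow> (nat \<Rightarrow> real) \<Rightarrow> real" where
  "linfnorm d x = Max (insert 0 ((\<lambda>j. \<bar>x j\<bar>) ` {..<d}))"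

text \<open>First unit vector e_1 (index 0 is the first coordinate).\<close>
definition e1 :: "nat \<Rightarrow> real" where
  "e1 k = (if k = 0 then 1 else 0)"

definition vecmat :: "nat \<Rightarrow> (nat \<Rightarrow> real) \<Rightarrow> (nat \<Rightarrow> nat \<Rightarrow> real) \<Rightarrow> nat \<Rightarrow> real" where
  "vecmat d v A k = (\<Sum>j<d. v j * A j k)"

definition dotp :: "nat \<Rightarrow> (nat \<Rightarrow> real) \<Rightarrow> (nat \<Rightarrow> real) \<Rightarrow> real" where
  "dotp d v x = (\<Sum>j<d. v j * x j)"

definition is_inverse_mat :: "nat \<Rightarrow> (nat \<Rightarrow> nat \<Rightarrow> real) \<Rightarrow> (nat \<Rightarrow> nat \<Rightarrow> real) \<Rightarrow> bool" where
  "is_inverse_mat d A B \<longleftrightarrow>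
     (\<forall>i<d. \<forall>k<d. (\<Sum>j<d. A i j * B j k) = (if i = k then 1 else 0)) \<and>
     (\<forall>i<d. \<forall>k<d. (\<Sum>j<d. B i j * A j k) = (if i = k then 1 else 0))"

text \<open>Frechet differentiability of a scalar function on R^d at beta with gradient Df
  (all norms on R^d are equivalent; the l1 norm is used).\<close>
definition frechet_diff_at :: "nat \<Rightarrow> ((nat \<Rightarrow> real) \<Rightarrow> real) \<Rightarrow> (nat \<Rightarrow> real) \<Rightarrow> (nat \<Rightarrow> real) \<Rightarrow> bool" where
  "frechet_diff_at d f Df \<beta> \<longleftrightarrow>
     (\<forall>\<epsilon>>0. \<exists>\<delta>>0. \<forall>h\<in>vecs d. l1norm d h < \<delta> \<longrightarrow>
        \<bar>f (\<lambda>j. \<beta> j + h j) - f \<beta> - (\<Sum>j<d. Df j * h j)\<bar> \<le> \<epsilon> * l1norm d h)"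

text \<open>"lim_n P*(A_n) = 1", read via inner probability: there are measurable events
  B_n contained in A_n whose probability tends to 1 (equivalent to P*(A_n) -> 1 when the
  A_n are measurable).\<close>
definition wp_to_one :: "(nat \<Rightarrow> 'a measure) \<Rightarrow> (nat \<Rightarrow> 'a set) \<Rightarrow> bool" where
  "wp_to_one M A \<longleftrightarrow>
     (\<exists>B. (\<forall>n. B n \<in> sets (M n) \<and> B n \<subseteq> A n) \<and> (\<lambda>n. measure (M n) (B n)) \<longlonglongrightarrow> 1)"

definition op1 :: "(nat \<Rightarrow> 'a measure) \<Rightarrow> (nat \<Rightarrow> 'a \<Rightarrow> real) \<Rightarrow> bool" where
  "op1 M X \<longleftrightarrow> (\<forall>\<epsilon>>0. wp_to_one M (\<lambda>n. {\<omega> \<in> space (M n). \<bar>X n \<omega>\<bar> \<le> \<epsilon>}))"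

end

theory Submission
  imports Defs
begin

text \<open>On the intersection of the concentration events at theta* with the consistency events the
  bound is deterministic. Put Delta = beta_hat(theta*) - beta*; its first coordinate vanishes, so it is
  orthogonal to v*^T E_T(beta*) = e_1, and the mean value theorem along the segment from beta* to
  beta_hat(theta*) yields
    S_hat(beta_hat(theta*)) - S(beta*) = Delta^T (v_hat^T T(beta~) - v*^T E_T(beta*)) + (v_hat - v*)^T t(beta*).
  Hoelder's inequality bounds the two terms by r4 r3 and r5 r1, and the rate condition makes
  n^(1/2) times this bound vanish.\<close>

lemma abs_le_linfnorm: "j < d \<Longrightarrow> \<bar>x j\<bar> \<le> linfnorm d x"
  unfolding linfnorm_def by (intro Max_ge) auto

lemma l1norm_nonneg: "0 \<le> l1norm d x"
  unfolding l1norm_def by (intro sum_nonneg) auto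

lemma abs_dotp_le_l1norm_mult:
  assumes "\<And>j. j < d \<Longrightarrow> \<bar>b j\<bar> \<le> K"
  shows "\<bar>dotp d a b\<bar> \<le> l1norm d a * K"
proof -
  have "\<bar>dotp d a b\<bar> \<le> (\<Sum>j<d. \<bar>a j\<bar> * \<bar>b j\<bar>)"
    unfolding dotp_def abs_mult[symmetric] by (rule sum_abs)
  also have "\<dots> \<le> (\<Sum>j<d. \<bar>a j\<bar> * K)"
    by (intro sum_mono mult_left_mono) (auto simp: assms)
  finally show ?thesis by (simp add: l1norm_def sum_distrib_right)
qed

lemma vecmat_first_row_inverse:
  assumes "is_inverse_mat d A B" and "\<forall>j<d. v j = B 0 j" and "1 \<le> d" and "k < d"
  shows "vecmat d v A k = e1 k"
proof -
  have "vecmat d v A k = (\<Sum>j<d. B 0 j * A j k)"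
    unfolding vecmat_def using assms(2) by (intro sum.cong) auto
  then show ?thesis
    using assms(1,3,4) unfolding is_inverse_mat_def e1_def by auto
qed

lemma frechet_diff_at_has_real_derivative_line_0:
  assumes fd: "frechet_diff_at d f D \<beta>" and \<Delta>: "\<Delta> \<in> vecs d"
  shows "((\<lambda>s. f (\<lambda>j. \<beta> j + s * \<Delta> j)) has_real_derivative (\<Sum>j<d. D j * \<Delta> j)) (at 0)"
  unfolding has_field_derivative_iff LIM_eq
proof (intro allI impI)
  fix r :: real assume r: "r > 0"
  define S where "S = (\<Sum>j<d. D j * \<Delta> j)"
  define L where "L = l1norm d \<Delta> + 1"
  have L: "L > 0" using l1norm_nonneg[of d \<Delta>] by (simp add: L_def)
  define \<epsilon> where "\<epsilon> = r / (2 * L)"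
  have \<epsilon>: "\<epsilon> > 0" using r L by (simp add: \<epsilon>_def)
  obtain \<delta> where \<delta>: "\<delta> > 0" and incr: "\<And>h. h \<in> vecs d \<Longrightarrow> l1norm d h < \<delta> \<Longrightarrow>
      \<bar>f (\<lambda>j. \<beta> j + h j) - f \<beta> - (\<Sum>j<d. D j * h j)\<bar> \<le> \<epsilon> * l1norm d h"
    using fd \<epsilon> unfolding frechet_diff_at_def by blast
  show "\<exists>s>0. \<forall>y. y \<noteq> 0 \<and> norm (y - 0) < s \<longrightarrow>
      norm ((f (\<lambda>j. \<beta> j + y * \<Delta> j) - f (\<lambda>j. \<beta> j + 0 * \<Delta> j)) / (y - 0) - S) < r"
  proof (intro exI[of _ "\<delta> / L"] conjI allI impI)
    show "\<delta> / L > 0" using \<delta> L by simp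
    fix y :: real assume y: "y \<noteq> 0 \<and> norm (y - 0) < \<delta> / L"
    define F where "F = f (\<lambda>j. \<beta> j + y * \<Delta> j) - f \<beta>"
    have l1: "l1norm d (\<lambda>j. y * \<Delta> j) = \<bar>y\<bar> * (L - 1)"
      unfolding l1norm_def L_def by (simp add: abs_mult sum_distrib_left)
    have "\<bar>y\<bar> * L < \<delta>"
      using y L by (simp add: pos_less_divide_eq)
    then have "l1norm d (\<lambda>j. y * \<Delta> j) < \<delta>"
      unfolding l1 using abs_ge_zero[of y] by (simp add: right_diff_distrib)
    moreover have "(\<lambda>j. y * \<Delta> j) \<in> vecs d" using \<Delta> by (simp add: vecs_def)
    moreover have "(\<Sum>j<d. D j * (y * \<Delta> j)) = y * S"
      by (simp add: S_def sum_distrib_left ac_simps)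
    ultimately have "\<bar>F - y * S\<bar> \<le> \<epsilon> * (\<bar>y\<bar> * (L - 1))"
      using incr[of "\<lambda>j. y * \<Delta> j"] l1 by (simp add: F_def)
    also have "\<dots> \<le> \<epsilon> * (\<bar>y\<bar> * L)"
      using \<epsilon> by (intro mult_left_mono) auto
    also have "\<dots> = r / 2 * \<bar>y\<bar>"
      using L by (simp add: \<epsilon>_def)
    also have "\<dots> < r * \<bar>y\<bar>"
      using r y by simp
    finally have "\<bar>F - y * S\<bar> / \<bar>y\<bar> < r"
      using y by (simp add: divide_less_eq)
    moreover have "F / y - S = (F - y * S) / y"
      using y by (simp add: diff_divide_distrib)
    ultimately show "norm ((f (\<lambda>j. \<beta> j + y * \<Delta> j) - f (\<lambda>j. \<beta> j + 0 * \<Delta> j)) / (y - 0) - S) < r"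
      by (simp add: F_def abs_divide)
  qed
qed

lemma frechet_diff_at_has_real_derivative_line:
  assumes "frechet_diff_at d f D (\<lambda>j. \<beta> j + x * \<Delta> j)" and "\<Delta> \<in> vecs d"
  shows "((\<lambda>s. f (\<lambda>j. \<beta> j + s * \<Delta> j)) has_real_derivative (\<Sum>j<d. D j * \<Delta> j)) (at x)"
proof -
  have "((\<lambda>s. f (\<lambda>j. \<beta> j + (s + x) * \<Delta> j)) has_real_derivative (\<Sum>j<d. D j * \<Delta> j)) (at 0)"
    using frechet_diff_at_has_real_derivative_line_0[OF assms]
    by (simp add: algebra_simps)
  then show ?thesis
    using DERIV_shift[of "\<lambda>s. f (\<lambda>j. \<beta> j + s * \<Delta> j)" _ 0 x] by simp
qed

lemma dotp_mean_value_segment: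
  assumes diff: "\<And>\<beta> i. \<beta> \<in> vecs d \<Longrightarrow> i < d \<Longrightarrow> frechet_diff_at d (\<lambda>b. tt b i) (\<lambda>j. TT \<beta> i j) \<beta>"
    and b0: "b0 \<in> vecs d" and b1: "b1 \<in> vecs d"
  obtains z :: real where "0 < z" "z < 1"
    "dotp d v (tt b1) - dotp d v (tt b0)
       = dotp d (\<lambda>j. b1 j - b0 j) (vecmat d v (TT (\<lambda>j. z * b1 j + (1 - z) * b0 j)))"
proof -
  define \<Delta> where "\<Delta> j = b1 j - b0 j" for j
  define p where "p s = (\<lambda>j. b0 j + s * \<Delta> j)" for s
  have \<Delta>: "\<Delta> \<in> vecs d" using b0 b1 by (simp add: vecs_def \<Delta>_def)
  have p: "p s \<in> vecs d" for s using b0 \<Delta> by (simp add: vecs_def p_def)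
  have deriv: "((\<lambda>s. dotp d v (tt (p s))) has_real_derivative dotp d \<Delta> (vecmat d v (TT (p s)))) (at s)"
    for s
  proof -
    have "((\<lambda>s. \<Sum>i<d. v i * tt (p s) i) has_real_derivative
        (\<Sum>i<d. v i * (\<Sum>j<d. TT (p s) i j * \<Delta> j))) (at s)"
      unfolding p_def
      by (intro DERIV_sum DERIV_cmult frechet_diff_at_has_real_derivative_line \<Delta>)
         (use diff[OF p] in \<open>simp add: p_def\<close>)
    moreover have "(\<Sum>i<d. v i * (\<Sum>j<d. TT (p s) i j * \<Delta> j)) = dotp d \<Delta> (vecmat d v (TT (p s)))"
    proof -
      have "(\<Sum>i<d. v i * (\<Sum>j<d. TT (p s) i j * \<Delta> j)) = (\<Sum>i<d. \<Sum>j<d. \<Delta> j * (v i * TT (p s) i j))"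
        by (simp add: sum_distrib_left ac_simps)
      also have "\<dots> = (\<Sum>j<d. \<Sum>i<d. \<Delta> j * (v i * TT (p s) i j))"
        by (rule sum.swap)
      finally show ?thesis by (simp add: dotp_def vecmat_def sum_distrib_left)
    qed
    ultimately show ?thesis by (simp add: dotp_def)
  qed
  obtain z where z: "0 < z" "z < 1"
    and mv: "dotp d v (tt (p 1)) - dotp d v (tt (p 0)) = (1 - 0) * dotp d \<Delta> (vecmat d v (TT (p z)))"
    using MVT2[OF zero_less_one, of "\<lambda>s. dotp d v (tt (p s))"
        "\<lambda>s. dotp d \<Delta> (vecmat d v (TT (p s)))"] deriv by blast
  have ends: "p 1 = b1" "p 0 = b0" "p z = (\<lambda>j. z * b1 j + (1 - z) * b0 j)"
    by (auto simp: p_def \<Delta>_def algebra_simps)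
  have "dotp d v (tt b1) - dotp d v (tt b0)
      = dotp d (\<lambda>j. b1 j - b0 j) (vecmat d v (TT (\<lambda>j. z * b1 j + (1 - z) * b0 j)))"
    using mv by (simp only: ends \<Delta>_def[abs_def] diff_zero mult_1)
  with z show ?thesis by (rule that)
qed

lemma abs_debiased_score_diff_le:
  fixes tt :: "(nat \<Rightarrow> real) \<Rightarrow> nat \<Rightarrow> real" and TT :: "(nat \<Rightarrow> real) \<Rightarrow> nat \<Rightarrow> nat \<Rightarrow> real"
  assumes d: "1 \<le> d" and bs: "bs \<in> vecs d" and bh: "bh \<in> vecs d"
    and diff: "\<And>\<beta> i. \<beta> \<in> vecs d \<Longrightarrow> i < d \<Longrightarrow> frechet_diff_at d (\<lambda>b. tt b i) (\<lambda>j. TT \<beta> i j) \<beta>"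
    and first_row: "\<And>k. k < d \<Longrightarrow> vecmat d vs ETs k = e1 k"
    and root: "\<And>j. j < d \<Longrightarrow> Ets j = 0"
    and conc_t: "linfnorm d (\<lambda>j. tt bs j - Ets j) \<le> R1"
    and conc_T: "\<forall>\<nu>\<in>{0..1::real}. linfnorm d (\<lambda>k. vecmat d vh
        (TT (\<lambda>j. \<nu> * (bh(0 := \<theta>)) j + (1 - \<nu>) * bs j)) k - vecmat d vs ETs k) \<le> R3"
    and bs0: "bs 0 = \<theta>"
    and cons_\<beta>: "l1norm d (\<lambda>j. bh j - bs j) \<le> R4"
    and cons_v: "l1norm d (\<lambda>j. vh j - vs j) \<le> R5"
  shows "\<bar>dotp d vh (tt (bh(0 := \<theta>))) - dotp d vs (tt bs)\<bar> \<le> R4 * R3 + R5 * R1"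
proof -
  define b1 where "b1 = bh(0 := \<theta>)"
  define \<Delta> where "\<Delta> j = b1 j - bs j" for j
  have b1: "b1 \<in> vecs d" using bh d by (auto simp: vecs_def b1_def)
  have "l1norm d \<Delta> \<le> l1norm d (\<lambda>j. bh j - bs j)"
    unfolding l1norm_def \<Delta>_def b1_def by (intro sum_mono) (simp add: bs0)
  then have l1_\<Delta>: "l1norm d \<Delta> \<le> R4"
    using cons_\<beta> by linarith
  obtain z :: real where z: "0 < z" "z < 1" and mv: "dotp d vh (tt b1) - dotp d vh (tt bs)
      = dotp d \<Delta> (vecmat d vh (TT (\<lambda>j. z * b1 j + (1 - z) * bs j)))"
    unfolding \<Delta>_def[abs_def] by (rule dotp_mean_value_segment[OF diff bs b1])
  define w where "w k = vecmat d vh (TT (\<lambda>j. z * b1 j + (1 - z) * bs j)) k - vecmat d vs ETs k" for k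
  \<comment> \<open>\<open>\<Delta> 0 = 0\<close>, and \<open>vecmat d vs ETs = e1\<close> only sees the first coordinate\<close>
  have "dotp d \<Delta> (vecmat d vs ETs) = 0"
    unfolding dotp_def by (intro sum.neutral) (simp add: first_row e1_def \<Delta>_def b1_def bs0)
  moreover have "dotp d \<Delta> w = dotp d \<Delta> (vecmat d vh (TT (\<lambda>j. z * b1 j + (1 - z) * bs j)))
      - dotp d \<Delta> (vecmat d vs ETs)"
    unfolding dotp_def w_def by (simp add: right_diff_distrib sum_subtractf)
  ultimately have taylor: "dotp d vh (tt b1) - dotp d vh (tt bs) = dotp d \<Delta> w"
    using mv by simp
  have "linfnorm d w \<le> R3"
    using bspec[OF conc_T, of z] z unfolding w_def[abs_def] b1_def by simp
  then have w: "\<bar>w k\<bar> \<le> R3" if "k < d" for k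
    using abs_le_linfnorm[OF that] by (rule order_trans[rotated])
  have t: "\<bar>tt bs j\<bar> \<le> R1" if "j < d" for j
    using conc_t abs_le_linfnorm[OF that, of "\<lambda>j. tt bs j - Ets j"] root[OF that] by simp
  have "R3 \<ge> 0" "R1 \<ge> 0" using w[of 0] t[of 0] d by linarith+
  have "\<bar>dotp d \<Delta> w\<bar> \<le> R4 * R3"
    using abs_dotp_le_l1norm_mult[OF w] l1_\<Delta> \<open>R3 \<ge> 0\<close> by (meson mult_right_mono order_trans)
  moreover have "\<bar>dotp d (\<lambda>j. vh j - vs j) (tt bs)\<bar> \<le> R5 * R1"
    using abs_dotp_le_l1norm_mult[OF t] cons_v \<open>R1 \<ge> 0\<close> by (meson mult_right_mono order_trans)
  moreover have "dotp d vh (tt b1) - dotp d vs (tt bs)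
      = dotp d \<Delta> w + dotp d (\<lambda>j. vh j - vs j) (tt bs)"
    using taylor unfolding dotp_def by (simp add: left_diff_distrib sum_subtractf)
  ultimately have "\<bar>dotp d vh (tt b1) - dotp d vs (tt bs)\<bar> \<le> R4 * R3 + R5 * R1"
    by linarith
  then show ?thesis by (simp only: b1_def)
qed

lemma measure_Int_ge:
  assumes "prob_space M" "A \<in> sets M" "B \<in> sets M"
  shows "measure M A + measure M B - 1 \<le> measure M (A \<inter> B)"
proof -
  interpret prob_space M by (fact assms(1))
  have "measure M (A \<union> B) \<le> 1" by (rule prob_le_1)
  then show ?thesis
    using finite_measure_Union'[OF assms(2,3)] finite_measure_Diff'[OF assms(3,2)]
      finite_measure_Diff'[OF assms(2,3)]
    by (simp add: Int_commute)
qed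

lemma wp_to_one_Int:
  assumes prob: "\<And>n. prob_space (M n)" and "wp_to_one M A" and "wp_to_one M B"
  shows "wp_to_one M (\<lambda>n. A n \<inter> B n)"
proof -
  obtain A' B' where A': "\<And>n. A' n \<in> sets (M n) \<and> A' n \<subseteq> A n" "(\<lambda>n. measure (M n) (A' n)) \<longlonglongrightarrow> 1"
    and B': "\<And>n. B' n \<in> sets (M n) \<and> B' n \<subseteq> B n" "(\<lambda>n. measure (M n) (B' n)) \<longlonglongrightarrow> 1"
    using assms(2,3) unfolding wp_to_one_def by blast
  have lim: "(\<lambda>n. measure (M n) (A' n) + measure (M n) (B' n) - 1) \<longlonglongrightarrow> 1"
    using tendsto_diff[OF tendsto_add[OF A'(2) B'(2)] tendsto_const[of 1]] by simp
  have lower: "\<forall>n. measure (M n) (A' n) + measure (M n) (B' n) - 1 \<le> measure (M n) (A' n \<inter> B' n)"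
    using measure_Int_ge[OF prob] A'(1) B'(1) by blast
  have upper: "\<forall>n. measure (M n) (A' n \<inter> B' n) \<le> 1"
    using prob_space.prob_le_1[OF prob] by blast
  have "(\<lambda>n. measure (M n) (A' n \<inter> B' n)) \<longlonglongrightarrow> 1"
    using tendsto_sandwich[OF always_eventually[OF lower] always_eventually[OF upper] lim tendsto_const] .
  with A'(1) B'(1) show ?thesis
    unfolding wp_to_one_def by (intro exI[of _ "\<lambda>n. A' n \<inter> B' n"]) blast
qed

lemma wp_to_one_eventually_mono:
  assumes "wp_to_one M A" and "eventually (\<lambda>n. A n \<subseteq> C n) sequentially"
  shows "wp_to_one M C"
proof -
  obtain A' where A': "\<And>n. A' n \<in> sets (M n) \<and> A' n \<subseteq> A n" "(\<lambda>n. measure (M n) (A' n)) \<longlonglongrightarrow> 1"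
    using assms(1) unfolding wp_to_one_def by blast
  define C' where "C' n = (if A n \<subseteq> C n then A' n else {})" for n
  have "(\<lambda>n. measure (M n) (C' n)) \<longlonglongrightarrow> 1"
    using A'(2) by (rule Lim_transform_eventually) (use assms(2) in \<open>auto elim: eventually_mono simp: C'_def\<close>)
  moreover have "\<And>n. C' n \<in> sets (M n) \<and> C' n \<subseteq> C n" using A'(1) by (auto simp: C'_def)
  ultimately show ?thesis unfolding wp_to_one_def by blast
qed

lemma op1_mult_if_wp_to_one_abs_le:
  assumes "wp_to_one M (\<lambda>n. {\<omega> \<in> space (M n). \<bar>X n \<omega>\<bar> \<le> R n})"
    and "(\<lambda>n. c n * R n) \<longlonglongrightarrow> 0" and "\<And>n. 0 \<le> c n"
  shows "op1 M (\<lambda>n \<omega>. c n * X n \<omega>)"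
  unfolding op1_def
proof (intro allI impI)
  fix \<epsilon> :: real assume "\<epsilon> > 0"
  then have "eventually (\<lambda>n. c n * R n < \<epsilon>) sequentially" by (rule order_tendstoD(2)[OF assms(2)])
  then show "wp_to_one M (\<lambda>n. {\<omega> \<in> space (M n). \<bar>c n * X n \<omega>\<bar> \<le> \<epsilon>})"
    by (intro wp_to_one_eventually_mono[OF assms(1)])
       (auto elim!: eventually_mono simp: abs_mult assms(3)
             intro: order_trans[OF mult_left_mono[OF _ assms(3)]])
qed

theorem lemma1:
  fixes M :: "nat \<Rightarrow> 'a measure"
    and d :: "nat \<Rightarrow> nat" and q :: nat
    and Z :: "nat \<Rightarrow> 'a \<Rightarrow> (nat \<Rightarrow> nat \<Rightarrow> real)"
    and t :: "nat \<Rightarrow> (nat \<Rightarrow> nat \<Rightarrow> real) \<Rightarrow> (nat \<Rightarrow> real) \<Rightarrow> nat \<Rightarrow> real"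
    and T :: "nat \<Rightarrow> (nat \<Rightarrow> nat \<Rightarrow> real) \<Rightarrow> (nat \<Rightarrow> real) \<Rightarrow> nat \<Rightarrow> nat \<Rightarrow> real"
    and Et :: "nat \<Rightarrow> (nat \<Rightarrow> real) \<Rightarrow> nat \<Rightarrow> real"
    and ET :: "nat \<Rightarrow> (nat \<Rightarrow> real) \<Rightarrow> nat \<Rightarrow> nat \<Rightarrow> real"
    and \<beta>star :: "nat \<Rightarrow> nat \<Rightarrow> real" and \<theta>star :: real
    and vstar :: "nat \<Rightarrow> nat \<Rightarrow> real"
    and \<beta>hat :: "nat \<Rightarrow> 'a \<Rightarrow> nat \<Rightarrow> real"
    and vhat :: "nat \<Rightarrow> 'a \<Rightarrow> nat \<Rightarrow> real"
    and lam lam' :: "nat \<Rightarrow> real"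
    and N :: "real set"
    and r1 r2 r3 :: "nat \<Rightarrow> real \<Rightarrow> real"
    and r4 r5 :: "nat \<Rightarrow> real"
  assumes prob: "\<And>n. prob_space (M n)"
    and dpos: "\<And>n. 1 \<le> d n"
    and Zmat: "\<And>n \<omega>. \<omega> \<in> space (M n) \<Longrightarrow> Z n \<omega> \<in> mats n q"
    and t_diff: "\<And>n z i \<beta>. z \<in> mats n q \<Longrightarrow> i < d n \<Longrightarrow> \<beta> \<in> vecs (d n) \<Longrightarrow>
        frechet_diff_at (d n) (\<lambda>b. t n z b i) (\<lambda>j. T n z \<beta> i j) \<beta>"
    and T_diff: "\<And>n z. z \<in> mats n q \<Longrightarrow> \<exists>T2. \<forall>\<beta>\<in>vecs (d n). \<forall>i<d n. \<forall>j<d n.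
        frechet_diff_at (d n) (\<lambda>b. T n z b i j) (T2 \<beta> i j) \<beta>"
    and \<beta>star_vec: "\<And>n. \<beta>star n \<in> vecs (d n)"
    and \<theta>star: "\<And>n. \<beta>star n 0 = \<theta>star"
    and root: "\<And>n j. j < d n \<Longrightarrow> Et n (\<beta>star n) j = 0"
    and root_unique: "\<And>n \<beta>. \<beta> \<in> vecs (d n) \<Longrightarrow> (\<forall>j<d n. Et n \<beta> j = 0) \<Longrightarrow> \<beta> = \<beta>star n"
    and vstar_vec: "\<And>n. vstar n \<in> vecs (d n)"
    and vstar: "\<And>n. \<exists>B. is_inverse_mat (d n) (ET n (\<beta>star n)) B \<and> (\<forall>j<d n. vstar n j = B 0 j)"
    and \<beta>hat: "\<And>n \<omega>. \<omega> \<in> space (M n) \<Longrightarrow>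
        \<beta>hat n \<omega> \<in> vecs (d n) \<and> linfnorm (d n) (t n (Z n \<omega>) (\<beta>hat n \<omega>)) \<le> lam n \<and>
        (\<forall>b\<in>vecs (d n). linfnorm (d n) (t n (Z n \<omega>) b) \<le> lam n \<longrightarrow>
            l1norm (d n) (\<beta>hat n \<omega>) \<le> l1norm (d n) b)"
    and vhat: "\<And>n \<omega>. \<omega> \<in> space (M n) \<Longrightarrow>
        vhat n \<omega> \<in> vecs (d n) \<and>
        linfnorm (d n) (\<lambda>k. vecmat (d n) (vhat n \<omega>) (T n (Z n \<omega>) (\<beta>hat n \<omega>)) k - e1 k) \<le> lam' n \<and>
        (\<forall>v\<in>vecs (d n). linfnorm (d n) (\<lambda>k. vecmat (d n) v (T n (Z n \<omega>) (\<beta>hat n \<omega>)) k - e1 k) \<le> lam' n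
            \<longrightarrow> l1norm (d n) (vhat n \<omega>) \<le> l1norm (d n) v)"
    and N_open: "open N" and N_mem: "\<theta>star \<in> N"
    and r_sup: "(\<lambda>n. SUP \<theta>\<in>N. ereal (max (r1 n \<theta>) (max (r2 n \<theta>) (r3 n \<theta>)))) \<longlonglongrightarrow> 0"
    and conc1: "\<And>\<theta>. \<theta> \<in> N \<Longrightarrow> wp_to_one M (\<lambda>n. {\<omega> \<in> space (M n).
        linfnorm (d n) (\<lambda>j. t n (Z n \<omega>) ((\<beta>star n)(0 := \<theta>)) j - Et n ((\<beta>star n)(0 := \<theta>)) j)
          \<le> r1 n \<theta>})"
    and conc2: "\<And>\<theta>. \<theta> \<in> N \<Longrightarrow> wp_to_one M (\<lambda>n. {\<omega> \<in> space (M n).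
        \<bar>dotp (d n) (vstar n) (t n (Z n \<omega>) ((\<beta>star n)(0 := \<theta>)))
          - dotp (d n) (vstar n) (Et n ((\<beta>star n)(0 := \<theta>)))\<bar> \<le> r2 n \<theta>})"
    and conc3: "\<And>\<theta>. \<theta> \<in> N \<Longrightarrow> wp_to_one M (\<lambda>n. {\<omega> \<in> space (M n).
        \<forall>\<nu>\<in>{0..1::real}.
          linfnorm (d n) (\<lambda>k.
              vecmat (d n) (vhat n \<omega>)
                (T n (Z n \<omega>) (\<lambda>j. \<nu> * ((\<beta>hat n \<omega>)(0 := \<theta>)) j + (1 - \<nu>) * ((\<beta>star n)(0 := \<theta>)) j)) k
            - vecmat (d n) (vstar n) (ET n ((\<beta>star n)(0 := \<theta>))) k)
          \<le> r3 n \<theta>})"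
    and Et_bdd: "\<exists>C. \<forall>n. \<forall>\<theta>\<in>N. linfnorm (d n) (Et n ((\<beta>star n)(0 := \<theta>))) \<le> C"
    and ET_bdd: "\<exists>C. \<forall>n. \<forall>\<theta>\<in>N. \<forall>k. 1 \<le> k \<and> k < d n \<longrightarrow>
        \<bar>vecmat (d n) (vstar n) (ET n ((\<beta>star n)(0 := \<theta>))) k\<bar> \<le> C"
    and cons4: "wp_to_one M (\<lambda>n. {\<omega> \<in> space (M n).
        l1norm (d n) (\<lambda>j. \<beta>hat n \<omega> j - \<beta>star n j) \<le> r4 n})"
    and cons5: "wp_to_one M (\<lambda>n. {\<omega> \<in> space (M n).
        l1norm (d n) (\<lambda>j. vhat n \<omega> j - vstar n j) \<le> r5 n})"
    and r45: "(\<lambda>n. max (r4 n) (r5 n)) \<longlonglongrightarrow> 0"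
    and rate: "(\<lambda>n. sqrt (real n) * (r4 n * r3 n \<theta>star + r5 n * r1 n \<theta>star)) \<longlonglongrightarrow> 0"
  shows "op1 M (\<lambda>n \<omega>.
      sqrt (real n) * dotp (d n) (vhat n \<omega>) (t n (Z n \<omega>) ((\<beta>hat n \<omega>)(0 := \<theta>star)))
    - sqrt (real n) * dotp (d n) (vstar n) (t n (Z n \<omega>) (\<beta>star n)))"
proof -
  have \<beta>star_upd: "(\<beta>star n)(0 := \<theta>star) = \<beta>star n" for n
    using \<theta>star[of n] by (rule fun_upd_idem)
  have first_row: "vecmat (d n) (vstar n) (ET n (\<beta>star n)) k = e1 k" if "k < d n" for n k
    using vstar[of n] vecmat_first_row_inverse[OF _ _ dpos that] by blast
  have expansion: "\<bar>dotp (d n) (vhat n \<omega>) (t n (Z n \<omega>) ((\<beta>hat n \<omega>)(0 := \<theta>star)))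
        - dotp (d n) (vstar n) (t n (Z n \<omega>) (\<beta>star n))\<bar> \<le> r4 n * r3 n \<theta>star + r5 n * r1 n \<theta>star"
    if "\<omega> \<in> space (M n)"
      and "linfnorm (d n) (\<lambda>j. t n (Z n \<omega>) (\<beta>star n) j - Et n (\<beta>star n) j) \<le> r1 n \<theta>star"
      and "\<forall>\<nu>\<in>{0..1::real}. linfnorm (d n) (\<lambda>k. vecmat (d n) (vhat n \<omega>)
          (T n (Z n \<omega>) (\<lambda>j. \<nu> * ((\<beta>hat n \<omega>)(0 := \<theta>star)) j + (1 - \<nu>) * \<beta>star n j)) k
          - vecmat (d n) (vstar n) (ET n (\<beta>star n)) k) \<le> r3 n \<theta>star"
      and "l1norm (d n) (\<lambda>j. \<beta>hat n \<omega> j - \<beta>star n j) \<le> r4 n"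
      and "l1norm (d n) (\<lambda>j. vhat n \<omega> j - vstar n j) \<le> r5 n"
    for n \<omega>
  proof (rule abs_debiased_score_diff_le[where TT = "T n (Z n \<omega>)" and ETs = "ET n (\<beta>star n)"
        and Ets = "Et n (\<beta>star n)"])
    show "\<beta>hat n \<omega> \<in> vecs (d n)" using \<beta>hat[OF that(1)] by blast
    show "frechet_diff_at (d n) (\<lambda>b. t n (Z n \<omega>) b i) (\<lambda>j. T n (Z n \<omega>) \<beta> i j) \<beta>"
      if "\<beta> \<in> vecs (d n)" "i < d n" for \<beta> i
      using t_diff[OF Zmat] that \<open>\<omega> \<in> space (M n)\<close> by blast
  qed (use that dpos \<beta>star_vec first_row root \<theta>star in auto)
  have "wp_to_one M (\<lambda>n. {\<omega> \<in> space (M n).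
      \<bar>dotp (d n) (vhat n \<omega>) (t n (Z n \<omega>) ((\<beta>hat n \<omega>)(0 := \<theta>star)))
        - dotp (d n) (vstar n) (t n (Z n \<omega>) (\<beta>star n))\<bar> \<le> r4 n * r3 n \<theta>star + r5 n * r1 n \<theta>star})"
    by (rule wp_to_one_eventually_mono[OF wp_to_one_Int[OF prob wp_to_one_Int[OF prob
          wp_to_one_Int[OF prob conc1[OF N_mem] conc3[OF N_mem]] cons4] cons5]])
       (use expansion in \<open>auto simp: \<beta>star_upd intro!: always_eventually\<close>)
  from op1_mult_if_wp_to_one_abs_le[OF this rate] show ?thesis
    by (simp add: right_diff_distrib)
qed

end
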